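(* Let $F$ be a distribution on $\mathbb{R}$ with a density, and let $X, X_1, X_2,\ldots$ be i.i.d. with distribution $F$ and mean $\mu$. Suppose $\bar F(x)=1-F(x)=L(x)x^{-\alpha}$ for a slowly varying $L$ and $\alpha>2$, and $E|X|^{2+\delta}<\infty$ for some $\delta>0$. Let $\gamma=\gamma(n)=n\mu+\omega(\sqrt{n\log n})$ and let $u=u(n)=\omega\big((\gamma-n\mu)^\beta\big)$ for some $\beta>1$. Then, as $n\to\infty$, $$\tilde p(\tilde F_u)-\tilde p(F)=o(\tilde p(F)).$$
   Context: $S_n=X_1+\cdots+X_n$. For a distribution $G$, $\tilde p(G)=P_G(S_n\ge\gamma)$ is the probability that $S_n\ge\gamma$ when $X_1,\ldots,X_n$ are i.i.d. with law $G$. The truncated distribution $\tilde F_u$ is $\tilde F_u(x)=F(x)/F(u)$ for $x\le u$ and $1$ for $x>u$. $a_n=o(b_n)$: $a_n/b_n\to0$; $a_n=\omega(b_n)$: $a_n/b_n\to\infty$. *)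

theory Defs
  imports "HOL-Probability.Probability" "HOL-Library.Landau_Symbols"
begin

definition slowly_varying :: "(real \<Rightarrow> real) \<Rightarrow> bool" where
  "slowly_varying L \<longleftrightarrow> (\<forall>\<^sub>F x in at_top. L x > 0) \<and>
     (\<forall>c>0. ((\<lambda>x. L (c * x) / L x) \<longlongrightarrow> 1) at_top)"

definition ptilde :: "nat \<Rightarrow> real \<Rightarrow> real measure \<Rightarrow> real" where
  "ptilde n \<gamma> G = measure (PiM {..<n} (\<lambda>_. G))
      {x \<in> space (PiM {..<n} (\<lambda>_. G)). (\<Sum>i<n. x i) \<ge> \<gamma>}"

text \<open>Truncated law F~_u: cdf F(x)/F(u) for x \<le> u, 1 for x > u, i.e. the law conditioned on (-\<infinity>,u].\<close>
definition trunc_dist :: "real measure \<Rightarrow> real \<Rightarrow> real measure" where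
  "trunc_dist G u = uniform_measure G {..u}"

end

theory Submission
  imports Defs
begin

text \<open>
  Write \<open>t = \<gamma> - n\<mu>\<close> and \<open>G(x) = P(X > x)\<close>. Truncating at \<open>u\<close> only matters on the event
  that some summand exceeds \<open>u\<close>, which has probability at most \<open>n G(u)\<close>; after renormalising,
  \<open>|p(F\<^sub>u) - p(F)| \<le> 2n G(u)\<close>. Conversely, the single-big-jump events (summand \<open>i\<close> exceeds
  \<open>s = \<mu> + 3t/2\<close>, all others stay below \<open>s\<close> and their centred sum is at least \<open>-t/2\<close>) are
  disjoint and, by independence and Chebyshev, each has probability at least \<open>G(s)/2\<close> as soon as
  \<open>n/t\<^sup>2\<close> is small; so \<open>p(F) \<ge> n G(s)/2\<close>. Regular variation with index below \<open>-1\<close> gives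
  \<open>G(2x) \<le> G(x)/2\<close> for large \<open>x\<close>, hence \<open>G(u) \<le> 4(t/u) G(s)\<close>, and altogether
  \<open>|p(F\<^sub>u) - p(F)| \<le> 16 (t/u) p(F)\<close> with \<open>t/u \<rightarrow> 0\<close>.
  Only a finite second moment, \<open>\<alpha> > 1\<close>, \<open>t/\<surd>n \<rightarrow> \<infinity>\<close> and \<open>\<beta> \<ge> 1\<close> are needed.
\<close>

section \<open>Independent coordinates of a finite product\<close>

lemma PiM_uniform_measure:
  assumes N: "prob_space N" and I: "finite I" and A: "A \<in> sets N" and A_pos: "emeasure N A \<noteq> 0"
  shows "PiM I (\<lambda>_. uniform_measure N A) = uniform_measure (PiM I (\<lambda>_. N)) (PiE I (\<lambda>_. A))"
proof -
  interpret N: prob_space N by (rule N)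
  interpret U: product_prob_space "\<lambda>_. uniform_measure N A"
    by (intro product_prob_spaceI prob_space_uniform_measure) (use A A_pos in auto)
  interpret NN: product_prob_space "\<lambda>_. N"
    by (intro product_prob_spaceI N)
  have NA_pos: "measure N A > 0"
    using A_pos by (simp add: N.emeasure_eq_measure zero_less_measure_iff)
  have box: "PiE I (\<lambda>_. A) \<in> sets (PiM I (\<lambda>_. N))"
    by (rule sets_PiM_I_finite) (use I A in auto)
  show ?thesis
  proof (rule U.PiM_eqI[symmetric, OF I])
    show "sets (uniform_measure (PiM I (\<lambda>_. N)) (PiE I (\<lambda>_. A))) = sets (PiM I (\<lambda>_. uniform_measure N A))"
      unfolding sets_uniform_measure by (rule sets_PiM_cong) auto
    fix B assume B: "\<And>i. i \<in> I \<Longrightarrow> B i \<in> sets (uniform_measure N A)"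
    have "emeasure (uniform_measure (PiM I (\<lambda>_. N)) (PiE I (\<lambda>_. A))) (PiE I B)
        = emeasure (PiM I (\<lambda>_. N)) (PiE I (\<lambda>i. A \<inter> B i)) / emeasure (PiM I (\<lambda>_. N)) (PiE I (\<lambda>_. A))"
      using B I by (subst emeasure_uniform_measure[OF box]) (auto intro!: sets_PiM_I_finite simp: PiE_Int)
    also have "\<dots> = ennreal ((\<Prod>i\<in>I. measure N (A \<inter> B i)) / (\<Prod>i\<in>I. measure N A))"
      using A B I NA_pos
      by (simp add: NN.emeasure_PiM N.emeasure_eq_measure prod_ennreal ennreal_power prod_nonneg
          divide_ennreal[symmetric])
    also have "\<dots> = (\<Prod>i\<in>I. emeasure (uniform_measure N A) (B i))"
      using A B NA_pos
      by (simp add: prod_dividef prod_ennreal N.emeasure_eq_measure divide_ennreal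
          Int_commute)
    finally show "emeasure (uniform_measure (PiM I (\<lambda>_. N)) (PiE I (\<lambda>_. A))) (PiE I B)
        = (\<Prod>i\<in>I. emeasure (uniform_measure N A) (B i))" .
  qed
qed

lemma measure_PiM_PiE_const:
  assumes N: "prob_space N" and I: "finite I" and A: "A \<in> sets N"
  shows "measure (PiM I (\<lambda>_. N)) (PiE I (\<lambda>_. A)) = measure N A ^ card I"
proof -
  interpret N: prob_space N by (rule N)
  interpret NN: product_prob_space "\<lambda>_. N" by (intro product_prob_spaceI N)
  have "emeasure (PiM I (\<lambda>_. N)) (PiE I (\<lambda>_. A)) = ennreal (measure N A ^ card I)"
    using A I by (simp add: NN.emeasure_PiM N.emeasure_eq_measure prod_ennreal ennreal_power)
  then show ?thesis by (simp add: measure_def)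
qed

lemma indep_vars_PiM_coordinates:
  assumes N: "prob_space N" and I: "finite I"
  shows "prob_space.indep_vars (PiM I (\<lambda>_. N)) (\<lambda>_. N) (\<lambda>i x. x i) I"
proof -
  interpret P: prob_space "PiM I (\<lambda>_. N)" by (rule prob_space_PiM) (use N in auto)
  show ?thesis
  proof (cases "I = {}")
    case True
    then show ?thesis unfolding P.indep_vars_def P.indep_sets_def by auto
  next
    case False
    have "distr (PiM I (\<lambda>_. N)) (PiM I (\<lambda>_. N)) (\<lambda>x. restrict x I) = PiM I (\<lambda>_. N)"
      by (subst distr_cong[where g="\<lambda>x. x"]) (auto simp: space_PiM distr_id2)
    moreover have "PiM I (\<lambda>i. distr (PiM I (\<lambda>_. N)) N (\<lambda>x. x i)) = PiM I (\<lambda>_. N)"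
      by (rule PiM_cong, simp, rule distr_PiM_component) (use N in auto)
    ultimately show ?thesis
      by (subst P.indep_vars_iff_distr_eq_PiM'[OF False]) auto
  qed
qed

lemma
  fixes g :: "real \<Rightarrow> real" and N :: "real measure"
  assumes N: "prob_space N" and sN: "sets N = sets borel" and i: "i \<in> I"
    and g: "g \<in> borel_measurable borel"
  shows integral_PiM_component: "(\<integral>x. g (x i) \<partial>PiM I (\<lambda>_. N)) = (\<integral>x. g x \<partial>N)"
    and integrable_PiM_component_iff: "integrable (PiM I (\<lambda>_. N)) (\<lambda>x. g (x i)) \<longleftrightarrow> integrable N g"
proof -
  have D: "distr (PiM I (\<lambda>_. N)) N (\<lambda>x. x i) = N"
    by (rule distr_PiM_component) (use N i in auto)
  have gN: "g \<in> borel_measurable N" using g by (simp add: measurable_cong_sets[OF sN refl])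
  have m: "(\<lambda>x. x i) \<in> measurable (PiM I (\<lambda>_. N)) N" using i by measurable
  show "(\<integral>x. g (x i) \<partial>PiM I (\<lambda>_. N)) = (\<integral>x. g x \<partial>N)"
    using integral_distr[OF m gN] D by (simp add: comp_def)
  show "integrable (PiM I (\<lambda>_. N)) (\<lambda>x. g (x i)) \<longleftrightarrow> integrable N g"
    using integrable_distr_eq[OF m gN] D by simp
qed

lemma measure_PiM_component:
  fixes N :: "real measure"
  assumes N: "prob_space N" and sN: "sets N = sets borel" and i: "i \<in> I" and S: "S \<in> sets borel"
  shows "measure (PiM I (\<lambda>_. N)) {x \<in> space (PiM I (\<lambda>_. N)). x i \<in> S} = measure N S"
proof -
  have m: "(\<lambda>x. x i) \<in> measurable (PiM I (\<lambda>_. N)) N" using i by measurable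
  have "measure N S = measure (distr (PiM I (\<lambda>_. N)) N (\<lambda>x. x i)) S"
    using distr_PiM_component[of I "\<lambda>_. N" i] N i by simp
  also have "\<dots> = measure (PiM I (\<lambda>_. N)) ((\<lambda>x. x i) -` S \<inter> space (PiM I (\<lambda>_. N)))"
    by (rule measure_distr[OF m]) (use S sN in simp)
  finally show ?thesis by (simp add: vimage_def Int_def conj_commute)
qed

lemma
  fixes N :: "real measure"
  assumes N: "prob_space N" and sN: "sets N = sets borel" and I: "finite I" and jk: "j \<in> I" "k \<in> I"
    and sq_int: "integrable N (\<lambda>x. x\<^sup>2)" and mu: "\<mu> = (\<integral>x. x \<partial>N)"
  shows integrable_PiM_centered_product:
      "integrable (PiM I (\<lambda>_. N)) (\<lambda>x. (x j - \<mu>) * (x k - \<mu>))"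
    and integral_PiM_centered_product:
      "(\<integral>x. (x j - \<mu>) * (x k - \<mu>) \<partial>PiM I (\<lambda>_. N)) = (if j = k then (\<integral>x. (x - \<mu>)\<^sup>2 \<partial>N) else 0)"
proof -
  define P where "P = PiM I (\<lambda>_. N)"
  interpret N: prob_space N by (rule N)
  interpret P: prob_space P unfolding P_def by (rule prob_space_PiM) (use N in auto)
  have int: "integrable N (\<lambda>x. x)"
    using N.square_integrable_imp_integrable[of "\<lambda>x. x"] sq_int
    by (simp add: measurable_cong_sets[OF sN refl])
  have int_centered: "integrable N (\<lambda>x. x - \<mu>)" and mean_centered: "(\<integral>x. x - \<mu> \<partial>N) = 0"
    using int mu by (auto simp: N.prob_space)
  have "integrable P (\<lambda>x. (x j - \<mu>) * (x k - \<mu>))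
      \<and> (\<integral>x. (x j - \<mu>) * (x k - \<mu>) \<partial>P) = (if j = k then (\<integral>x. (x - \<mu>)\<^sup>2 \<partial>N) else 0)"
  proof (cases "j = k")
    case True
    have "integrable N (\<lambda>x. (x - \<mu>)\<^sup>2)"
      using int sq_int unfolding power2_diff
      by (intro Bochner_Integration.integrable_diff Bochner_Integration.integrable_add) auto
    then have "integrable P (\<lambda>x. (x j - \<mu>)\<^sup>2) \<and> (\<integral>x. (x j - \<mu>)\<^sup>2 \<partial>P) = (\<integral>x. (x - \<mu>)\<^sup>2 \<partial>N)"
      using integral_PiM_component[OF N sN jk(1), of "\<lambda>x. (x - \<mu>)\<^sup>2"]
        integrable_PiM_component_iff[OF N sN jk(1), of "\<lambda>x. (x - \<mu>)\<^sup>2"]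
      unfolding P_def by simp
    then show ?thesis using True by (simp add: power2_eq_square)
  next
    case False
    have centered: "integrable P (\<lambda>x. x i - \<mu>) \<and> (\<integral>x. x i - \<mu> \<partial>P) = 0" if "i \<in> I" for i
      using integral_PiM_component[OF N sN that, of "\<lambda>x. x - \<mu>"]
        integrable_PiM_component_iff[OF N sN that, of "\<lambda>x. x - \<mu>"] int_centered mean_centered
      unfolding P_def by simp
    have "P.indep_vars (\<lambda>_. N) (\<lambda>i x. x i) I"
      unfolding P_def by (rule indep_vars_PiM_coordinates[OF N I])
    then have "P.indep_vars (\<lambda>_. borel) (\<lambda>i x. x i - \<mu>) I"
      by (rule P.indep_vars_compose2[where Y="\<lambda>_ y. y - \<mu>", simplified])
        (simp add: measurable_cong_sets[OF sN refl])
    then have indep: "P.indep_vars (\<lambda>_. borel) (\<lambda>i x. x i - \<mu>) {j, k}"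
      by (rule P.indep_vars_subset) (use jk in auto)
    have "\<And>i. i \<in> {j, k} \<Longrightarrow> integrable P (\<lambda>x. x i - \<mu>)" using centered jk by auto
    from P.indep_vars_integrable[OF _ indep this] P.indep_vars_lebesgue_integral[OF _ indep this]
    show ?thesis using False centered jk by auto
  qed
  then show "integrable (PiM I (\<lambda>_. N)) (\<lambda>x. (x j - \<mu>) * (x k - \<mu>))"
    "(\<integral>x. (x j - \<mu>) * (x k - \<mu>) \<partial>PiM I (\<lambda>_. N)) = (if j = k then (\<integral>x. (x - \<mu>)\<^sup>2 \<partial>N) else 0)"
    unfolding P_def by auto
qed

lemma
  fixes N :: "real measure"
  assumes N: "prob_space N" and sN: "sets N = sets borel" and I: "finite I" and K: "K \<subseteq> I"
    and sq_int: "integrable N (\<lambda>x. x\<^sup>2)" and mu: "\<mu> = (\<integral>x. x \<partial>N)"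
  shows integrable_PiM_centered_sum_square:
      "integrable (PiM I (\<lambda>_. N)) (\<lambda>x. (\<Sum>j\<in>K. x j - \<mu>)\<^sup>2)"
    and integral_PiM_centered_sum_square:
      "(\<integral>x. (\<Sum>j\<in>K. x j - \<mu>)\<^sup>2 \<partial>PiM I (\<lambda>_. N)) = card K * (\<integral>x. (x - \<mu>)\<^sup>2 \<partial>N)"
proof -
  have product: "integrable (PiM I (\<lambda>_. N)) (\<lambda>x. (x j - \<mu>) * (x k - \<mu>))"
    "(\<integral>x. (x j - \<mu>) * (x k - \<mu>) \<partial>PiM I (\<lambda>_. N)) = (if j = k then (\<integral>x. (x - \<mu>)\<^sup>2 \<partial>N) else 0)"
    if "j \<in> K" "k \<in> K" for j k
    using integrable_PiM_centered_product[OF N sN I _ _ sq_int mu, of j k]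
      integral_PiM_centered_product[OF N sN I _ _ sq_int mu, of j k] subsetD[OF K that(1)] subsetD[OF K that(2)]
    by simp_all
  have expand: "(\<lambda>x. (\<Sum>j\<in>K. x j - \<mu>)\<^sup>2) = (\<lambda>x. \<Sum>j\<in>K. \<Sum>k\<in>K. (x j - \<mu>) * (x k - \<mu>))"
    by (simp add: power2_eq_square sum_product)
  show "integrable (PiM I (\<lambda>_. N)) (\<lambda>x. (\<Sum>j\<in>K. x j - \<mu>)\<^sup>2)"
    unfolding expand using product(1) by (intro Bochner_Integration.integrable_sum) auto
  have "(\<integral>x. (\<Sum>j\<in>K. x j - \<mu>)\<^sup>2 \<partial>PiM I (\<lambda>_. N))
      = (\<Sum>j\<in>K. \<integral>x. (\<Sum>k\<in>K. (x j - \<mu>) * (x k - \<mu>)) \<partial>PiM I (\<lambda>_. N))"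
    unfolding expand
    by (intro Bochner_Integration.integral_sum Bochner_Integration.integrable_sum product(1))
  also have "\<dots> = (\<Sum>j\<in>K. \<Sum>k\<in>K. \<integral>x. (x j - \<mu>) * (x k - \<mu>) \<partial>PiM I (\<lambda>_. N))"
    by (intro sum.cong refl Bochner_Integration.integral_sum product(1))
  also have "\<dots> = (\<Sum>j\<in>K. \<Sum>k\<in>K. if j = k then (\<integral>x. (x - \<mu>)\<^sup>2 \<partial>N) else 0)"
    by (intro sum.cong refl product(2))
  also have "\<dots> = card K * (\<integral>x. (x - \<mu>)\<^sup>2 \<partial>N)"
    using finite_subset[OF K I] by simp
  finally show "(\<integral>x. (\<Sum>j\<in>K. x j - \<mu>)\<^sup>2 \<partial>PiM I (\<lambda>_. N)) = card K * (\<integral>x. (x - \<mu>)\<^sup>2 \<partial>N)" .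
qed

section \<open>Truncation\<close>

lemma ptilde_trunc_dist_eq:
  fixes N :: "real measure" and n :: nat
  assumes N: "prob_space N" and sN: "sets N = sets borel" and pos: "measure N {..u} > 0"
  defines "P \<equiv> PiM {..<n} (\<lambda>_. N)"
  shows "ptilde n \<gamma> (trunc_dist N u)
    = measure P (PiE {..<n} (\<lambda>_. {..u}) \<inter> {x \<in> space P. \<gamma> \<le> (\<Sum>i<n. x i)}) / measure N {..u} ^ n"
proof -
  interpret N: prob_space N by (rule N)
  interpret P: prob_space P unfolding P_def by (rule prob_space_PiM) (use N in auto)
  define B where "B = PiE {..<n} (\<lambda>_. {..u})"
  have B: "B \<in> sets P" unfolding B_def P_def by (rule sets_PiM_I_finite) (use sN in auto)
  have PB: "measure P B = measure N {..u} ^ n"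
    unfolding P_def B_def using measure_PiM_PiE_const[OF N, of "{..<n}" "{..u}"] sN by simp
  define E where "E = {x \<in> space P. \<gamma> \<le> (\<Sum>i<n. x i)}"
  have E: "E \<in> sets P" unfolding E_def P_def using sN by measurable
  have "PiM {..<n} (\<lambda>_. trunc_dist N u) = uniform_measure P B"
    unfolding trunc_dist_def P_def B_def
    by (rule PiM_uniform_measure[OF N]) (use sN pos in \<open>auto simp: N.emeasure_eq_measure\<close>)
  moreover have "space (PiM {..<n} (\<lambda>_. trunc_dist N u)) = space P"
    unfolding P_def trunc_dist_def by (simp add: space_PiM)
  ultimately have "ptilde n \<gamma> (trunc_dist N u) = measure (uniform_measure P B) E"
    unfolding ptilde_def E_def by simp
  also have "\<dots> = measure P (B \<inter> E) / measure N {..u} ^ n"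
    using B E PB pos by (simp add: P.emeasure_eq_measure)
  finally show ?thesis unfolding B_def E_def .
qed

lemma measure_greaterThan_eq_1_minus_atMost:
  fixes N :: "real measure"
  assumes N: "prob_space N" and sN: "sets N = sets borel"
  shows "measure N {x<..} = 1 - measure N {..x}"
proof -
  interpret N: prob_space N by (rule N)
  have "{x<..} = space N - {..x}" using sets_eq_imp_space_eq[OF sN] by auto
  then show ?thesis using N.prob_compl[of "{..x}"] sN by simp
qed

lemma (in prob_space) prob_cond_diff_le:
  assumes B: "B \<in> events" and E: "E \<in> events" and half: "prob B \<ge> 1/2"
  shows "\<bar>prob (B \<inter> E) / prob B - prob E\<bar> \<le> 2 * (1 - prob B)"
proof -
  define a where "a = prob (B \<inter> E)"
  have "(B \<inter> E) \<union> (E - B) = E" by blast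
  then have "prob E = a + prob (E - B)"
    unfolding a_def using B E finite_measure_Union[of "B \<inter> E" "E - B"] by auto
  moreover have "prob (E - B) \<le> prob (space M - B)"
    using B E sets.sets_into_space by (intro finite_measure_mono) auto
  moreover have "prob (space M - B) = 1 - prob B" by (rule prob_compl[OF B])
  moreover have "0 \<le> a / prob B - a" "a / prob B - a \<le> 2 * (1 - prob B)"
  proof -
    have "a / prob B - a = a * (1 - prob B) / prob B" using half by (simp add: field_simps)
    moreover have "a * (1 - prob B) / prob B \<le> 1 * (1 - prob B) / (1/2)"
      using half unfolding a_def by (intro frac_le mult_right_mono) auto
    moreover have "0 \<le> a * (1 - prob B) / prob B" unfolding a_def by simp
    ultimately show "0 \<le> a / prob B - a" "a / prob B - a \<le> 2 * (1 - prob B)" by simp_all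
  qed
  moreover note measure_nonneg[of M "E - B"] prob_le_1[of B]
  ultimately have "\<bar>a / prob B - prob E\<bar> \<le> 2 * (1 - prob B)"
    by (intro abs_leI) (smt (verit))+
  then show ?thesis unfolding a_def .
qed

lemma ptilde_trunc_dist_diff_le:
  fixes N :: "real measure"
  assumes N: "prob_space N" and sN: "sets N = sets borel" and n: "n \<ge> 1"
    and small: "n * measure N {u<..} \<le> 1/2"
  shows "\<bar>ptilde n \<gamma> (trunc_dist N u) - ptilde n \<gamma> N\<bar> \<le> 2 * real n * measure N {u<..}"
proof -
  define P where "P = PiM {..<n} (\<lambda>_. N)"
  interpret P: prob_space P unfolding P_def by (rule prob_space_PiM) (use N in auto)
  define E where "E = {x \<in> space P. \<gamma> \<le> (\<Sum>i<n. x i)}"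
  define B where "B = PiE {..<n} (\<lambda>_. {..u})"
  define F where "F = measure N {..u}"
  have E: "E \<in> sets P" unfolding E_def P_def using sN by measurable
  have B: "B \<in> sets P" unfolding B_def P_def by (rule sets_PiM_I_finite) (use sN in auto)
  have PB: "measure P B = F ^ n"
    unfolding P_def B_def F_def using measure_PiM_PiE_const[OF N, of "{..<n}" "{..u}"] sN by simp
  have "1 - F = measure N {u<..}"
    unfolding F_def using measure_greaterThan_eq_1_minus_atMost[OF N sN] by simp
  moreover have "1 - n * (1 - F) \<le> F ^ n"
    using Bernoulli_inequality[of "F - 1" n] prob_space.prob_le_1[OF N] unfolding F_def
    by (simp add: algebra_simps)
  ultimately have Fn: "1 - n * measure N {u<..} \<le> F ^ n" "1/2 \<le> F ^ n" using small by auto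
  have "F > 0"
  proof (rule ccontr)
    assume "\<not> F > 0"
    then have "F = 0" using measure_nonneg[of N "{..u}"] unfolding F_def by linarith
    then show False using Fn(2) n by (simp add: power_0_left)
  qed
  then have "ptilde n \<gamma> (trunc_dist N u) = measure P (B \<inter> E) / measure P B"
    using ptilde_trunc_dist_eq[OF N sN, of u n \<gamma>] PB unfolding B_def E_def P_def F_def by simp
  moreover have "ptilde n \<gamma> N = measure P E" unfolding ptilde_def E_def P_def ..
  ultimately have "\<bar>ptilde n \<gamma> (trunc_dist N u) - ptilde n \<gamma> N\<bar> \<le> 2 * (1 - F ^ n)"
    using P.prob_cond_diff_le[OF B E] PB Fn by simp
  with Fn(1) show ?thesis by simp
qed

section \<open>Single big jumps\<close>

lemma measure_PiM_component_Int_restrict: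
  fixes N :: "real measure"
  assumes N: "prob_space N" and sN: "sets N = sets borel" and I: "finite I"
    and i: "i \<in> I" and K: "K \<subseteq> I" "i \<notin> K"
    and S: "S \<in> sets borel" and Q: "Q \<in> sets (PiM K (\<lambda>_. N))"
  defines "P \<equiv> PiM I (\<lambda>_. N)"
  shows "measure P {x \<in> space P. x i \<in> S \<and> restrict x K \<in> Q}
    = measure N S * measure P {x \<in> space P. restrict x K \<in> Q}"
proof -
  interpret P: prob_space P unfolding P_def by (rule prob_space_PiM) (use N in auto)
  have "P.indep_vars (\<lambda>_. N) (\<lambda>i x. x i) I"
    unfolding P_def by (rule indep_vars_PiM_coordinates[OF N I])
  then have indep: "P.indep_var (PiM {i} (\<lambda>_. N)) (\<lambda>x. restrict x {i}) (PiM K (\<lambda>_. N)) (\<lambda>x. restrict x K)"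
    using P.indep_var_restrict[of "\<lambda>_. N" "\<lambda>i x. x i" I "{i}" K] i K by auto
  define S' where "S' = {f \<in> space (PiM {i} (\<lambda>_. N)). f i \<in> S}"
  have S': "S' \<in> sets (PiM {i} (\<lambda>_. N))" unfolding S'_def using S sN by measurable
  have "(\<lambda>x. (restrict x {i}, restrict x K)) -` (S' \<times> Q) \<inter> space P
      = {x \<in> space P. x i \<in> S \<and> restrict x K \<in> Q}"
    unfolding S'_def P_def using i by (auto simp: space_PiM)
  moreover have "(\<lambda>x. restrict x {i}) -` S' \<inter> space P = {x \<in> space P. x i \<in> S}"
    unfolding S'_def P_def using i by (auto simp: space_PiM)
  moreover have "(\<lambda>x. restrict x K) -` Q \<inter> space P = {x \<in> space P. restrict x K \<in> Q}"
    by auto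
  ultimately show ?thesis
    using P.indep_varD[OF indep S' Q] measure_PiM_component[OF N sN i S] unfolding P_def by simp
qed

lemma measure_PiM_coordinates_le_and_centered_sum_ge:
  fixes N :: "real measure"
  assumes N: "prob_space N" and sN: "sets N = sets borel" and I: "finite I" and K: "K \<subseteq> I"
    and sq_int: "integrable N (\<lambda>x. x\<^sup>2)" and mu: "\<mu> = (\<integral>x. x \<partial>N)" and t: "t > 0"
  defines "P \<equiv> PiM I (\<lambda>_. N)"
  shows "measure P {x \<in> space P. (\<forall>j\<in>K. x j \<le> s) \<and> - t / 2 \<le> (\<Sum>j\<in>K. x j - \<mu>)}
    \<ge> 1 - card K * measure N {s<..} - 4 * real (card K) * (\<integral>x. (x - \<mu>)\<^sup>2 \<partial>N) / t\<^sup>2"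
proof -
  interpret P: prob_space P unfolding P_def by (rule prob_space_PiM) (use N in auto)
  define C where "C = {x \<in> space P. (\<forall>j\<in>K. x j \<le> s) \<and> - t / 2 \<le> (\<Sum>j\<in>K. x j - \<mu>)}"
  define Big where "Big j = {x \<in> space P. x j \<in> {s<..}}" for j
  define Dev where "Dev = {x \<in> space P. t / 2 \<le> \<bar>\<Sum>j\<in>K. x j - \<mu>\<bar>}"
  have fin: "finite K" using finite_subset[OF K I] .
  have coord: "(\<lambda>x. x j) \<in> borel_measurable P" if "j \<in> K" for j
    using that K sN unfolding P_def by (auto simp: measurable_cong_sets[OF sN refl])
  have sum_meas[measurable]: "(\<lambda>x. \<Sum>j\<in>K. x j - \<mu>) \<in> borel_measurable P"
    using coord by (intro borel_measurable_sum) auto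
  have C: "C \<in> sets P" and Dev: "Dev \<in> sets P" unfolding C_def Dev_def
    using coord fin by measurable
  have Big: "Big j \<in> sets P" if "j \<in> K" for j
    unfolding Big_def using coord[OF that] by measurable
  have "1 - measure P C = measure P (space P - C)" using P.prob_compl[OF C] by simp
  also have "\<dots> \<le> measure P ((\<Union>j\<in>K. Big j) \<union> Dev)"
  proof (rule P.finite_measure_mono)
    show "(\<Union>j\<in>K. Big j) \<union> Dev \<in> sets P" using Big Dev fin by (intro sets.Un sets.finite_UN) auto
    show "space P - C \<subseteq> (\<Union>j\<in>K. Big j) \<union> Dev" by (auto simp: C_def Big_def Dev_def)
  qed
  also have "\<dots> \<le> measure P (\<Union>j\<in>K. Big j) + measure P Dev"
    using Big Dev fin by (intro measure_subadditive) (auto simp: P.emeasure_eq_measure)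
  also have "measure P (\<Union>j\<in>K. Big j) \<le> (\<Sum>j\<in>K. measure P (Big j))"
    using Big fin by (intro P.finite_measure_subadditive_finite) auto
  also have "(\<Sum>j\<in>K. measure P (Big j)) = card K * measure N {s<..}"
    using measure_PiM_component[OF N sN _ , of _ I "{s<..}"] K
    unfolding Big_def P_def by (simp cong: sum.cong add: subset_iff)
  also have "measure P Dev \<le> (\<integral>x. (\<Sum>j\<in>K. x j - \<mu>)\<^sup>2 \<partial>P) / (t / 2)\<^sup>2"
    unfolding Dev_def using t sum_meas integrable_PiM_centered_sum_square[OF N sN I K sq_int mu]
    by (intro P.second_moment_method) (auto simp: P_def)
  also have "(\<integral>x. (\<Sum>j\<in>K. x j - \<mu>)\<^sup>2 \<partial>P) = card K * (\<integral>x. (x - \<mu>)\<^sup>2 \<partial>N)"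
    unfolding P_def by (rule integral_PiM_centered_sum_square[OF N sN I K sq_int mu])
  finally show ?thesis unfolding C_def by (simp add: power_divide)
qed

lemma measure_PiM_single_big_jump_ge:
  fixes N :: "real measure" and s t \<mu> :: real
  assumes N: "prob_space N" and sN: "sets N = sets borel" and I: "finite I" and i: "i \<in> I"
    and sq_int: "integrable N (\<lambda>x. x\<^sup>2)" and mu: "\<mu> = (\<integral>x. x \<partial>N)" and t: "t > 0"
  defines "P \<equiv> PiM I (\<lambda>_. N)" and "q \<equiv> measure N {s<..}"
    and "v \<equiv> (\<integral>x. (x - \<mu>)\<^sup>2 \<partial>N)"
  shows "q * (1 - real (card I) * q - 4 * real (card I) * v / t\<^sup>2)
    \<le> measure P {x \<in> space P. s < x i \<and> (\<forall>j\<in>I - {i}. x j \<le> s) \<and> - t / 2 \<le> (\<Sum>j\<in>I - {i}. x j - \<mu>)}"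
proof -
  define K where "K = I - {i}"
  define Q where "Q = {f \<in> space (PiM K (\<lambda>_. N)). (\<forall>j\<in>K. f j \<le> s) \<and> - t / 2 \<le> (\<Sum>j\<in>K. f j - \<mu>)}"
  define C where "C = {x \<in> space P. (\<forall>j\<in>K. x j \<le> s) \<and> - t / 2 \<le> (\<Sum>j\<in>K. x j - \<mu>)}"
  have K: "K \<subseteq> I" "i \<notin> K" "finite K" unfolding K_def using I by auto
  have Q: "Q \<in> sets (PiM K (\<lambda>_. N))" unfolding Q_def using sN K(3) by measurable
  have restrict_Q: "restrict x K \<in> Q \<longleftrightarrow> (\<forall>j\<in>K. x j \<le> s) \<and> - t / 2 \<le> (\<Sum>j\<in>K. x j - \<mu>)"
    if "x \<in> space P" for x
    using that K(1) unfolding Q_def P_def by (auto simp: space_PiM)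
  have "measure P {x \<in> space P. x i \<in> {s<..} \<and> restrict x K \<in> Q}
      = q * measure P {x \<in> space P. restrict x K \<in> Q}"
    unfolding P_def q_def by (rule measure_PiM_component_Int_restrict[OF N sN I i K(1,2) _ Q]) simp
  moreover have "{x \<in> space P. x i \<in> {s<..} \<and> restrict x K \<in> Q}
      = {x \<in> space P. s < x i \<and> (\<forall>j\<in>K. x j \<le> s) \<and> - t / 2 \<le> (\<Sum>j\<in>K. x j - \<mu>)}"
    "{x \<in> space P. restrict x K \<in> Q} = C"
    unfolding C_def by (auto simp: restrict_Q)
  moreover have "1 - card I * q - 4 * real (card I) * v / t\<^sup>2 \<le> measure P C"
  proof -
    have card: "real (card K) \<le> card I" using card_mono[OF I K(1)] by simp
    have "real (card K) * q \<le> card I * q"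
      using card unfolding q_def by (rule mult_right_mono) simp
    moreover have "4 * real (card K) * v / t\<^sup>2 \<le> 4 * real (card I) * v / t\<^sup>2"
      using card unfolding v_def by (intro divide_right_mono mult_right_mono mult_left_mono) auto
    moreover have "1 - card K * q - 4 * real (card K) * v / t\<^sup>2 \<le> measure P C"
      using measure_PiM_coordinates_le_and_centered_sum_ge[OF N sN I K(1) sq_int mu t]
      unfolding C_def P_def q_def v_def by simp
    ultimately show ?thesis by linarith
  qed
  ultimately show ?thesis
    unfolding K_def[symmetric] q_def by (simp add: mult_left_mono)
qed

lemma ptilde_ge_one_big_jump:
  fixes N :: "real measure"
  assumes N: "prob_space N" and sN: "sets N = sets borel"
    and sq_int: "integrable N (\<lambda>x. x\<^sup>2)" and mu: "\<mu> = (\<integral>x. x \<partial>N)"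
    and t: "t > 0" and \<gamma>: "\<gamma> \<le> s - t / 2 + (real n - 1) * \<mu>"
  shows "ptilde n \<gamma> N \<ge> n * measure N {s<..}
    * (1 - real n * measure N {s<..} - 4 * real n * (\<integral>x. (x - \<mu>)\<^sup>2 \<partial>N) / t\<^sup>2)"
proof -
  define P where "P = PiM {..<n} (\<lambda>_. N)"
  interpret P: prob_space P unfolding P_def by (rule prob_space_PiM) (use N in auto)
  define K where "K i = {..<n} - {i}" for i
  define A where "A i = {x \<in> space P. s < x i \<and> (\<forall>j\<in>K i. x j \<le> s) \<and> - t / 2 \<le> (\<Sum>j\<in>K i. x j - \<mu>)}"
    for i
  have A: "A i \<in> sets P" if "i < n" for i
    unfolding A_def K_def P_def using sN by (measurable; simp add: that)
  have disj: "disjoint_family_on A {..<n}"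
    unfolding disjoint_family_on_def
  proof (intro ballI impI)
    fix i j assume "i \<in> {..<n}" "j \<in> {..<n}" "i \<noteq> j"
    then have "j \<in> K i" unfolding K_def by auto
    then show "A i \<inter> A j = {}" by (fastforce simp: A_def)
  qed
  have cover: "(\<Union>i<n. A i) \<subseteq> {x \<in> space P. \<gamma> \<le> (\<Sum>i<n. x i)}"
  proof safe
    fix x i assume i: "i < n" and x: "x \<in> A i"
    have "(\<Sum>j<n. x j) = x i + (\<Sum>j\<in>K i. x j)"
      unfolding K_def using i by (simp add: sum.remove)
    moreover have "(\<Sum>j\<in>K i. x j - \<mu>) = (\<Sum>j\<in>K i. x j) - (real n - 1) * \<mu>"
      unfolding K_def using i by (simp add: sum_subtractf of_nat_diff)
    ultimately have "(\<Sum>j<n. x j) = x i + (\<Sum>j\<in>K i. x j - \<mu>) + (real n - 1) * \<mu>"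
      by simp
    also have "\<dots> \<ge> s - t / 2 + (real n - 1) * \<mu>"
      using x by (auto simp: A_def)
    finally show "\<gamma> \<le> (\<Sum>j<n. x j)" using \<gamma> by linarith
  qed (auto simp: A_def)
  have "(\<Sum>i<n. measure P (A i)) = measure P (\<Union>i<n. A i)"
    using A disj by (intro P.finite_measure_finite_Union[symmetric]) auto
  also have "\<dots> \<le> ptilde n \<gamma> N"
    unfolding ptilde_def P_def[symmetric]
    by (rule P.finite_measure_mono[OF cover]) (use sN in \<open>simp add: P_def\<close>)
  finally have "(\<Sum>i<n. measure P (A i)) \<le> ptilde n \<gamma> N" .
  moreover have "(\<Sum>i<n. measure N {s<..}
      * (1 - real n * measure N {s<..} - 4 * real n * (\<integral>x. (x - \<mu>)\<^sup>2 \<partial>N) / t\<^sup>2))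
      \<le> (\<Sum>i<n. measure P (A i))"
    using measure_PiM_single_big_jump_ge[OF N sN _ _ sq_int mu t, of "{..<n}" _ s]
    unfolding A_def K_def P_def by (intro sum_mono) simp
  ultimately show ?thesis by simp
qed

lemma ptilde_ge_half_one_big_jump:
  fixes N :: "real measure"
  assumes N: "prob_space N" and sN: "sets N = sets borel"
    and sq_int: "integrable N (\<lambda>x. x\<^sup>2)" and mu: "\<mu> = (\<integral>x. x \<partial>N)"
    and t: "t > 0" "2 * \<bar>\<mu>\<bar> \<le> t" and \<gamma>: "\<gamma> = n * \<mu> + t"
    and small: "16 * ((\<integral>x. x\<^sup>2 \<partial>N) + (\<integral>x. (x - \<mu>)\<^sup>2 \<partial>N)) * n \<le> t\<^sup>2"
  shows "n * measure N {\<mu> + 3/2 * t<..} / 2 \<le> ptilde n \<gamma> N"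
proof -
  interpret N: prob_space N by (rule N)
  define s where "s = \<mu> + 3/2 * t"
  define q where "q = measure N {s<..}"
  define m where "m = (\<integral>x. x\<^sup>2 \<partial>N)"
  define v where "v = (\<integral>x. (x - \<mu>)\<^sup>2 \<partial>N)"
  have "t \<le> s" unfolding s_def using t by linarith
  have "0 \<le> real n * m" "0 \<le> real n * v" unfolding m_def v_def by simp_all
  moreover have "16 * (real n * m) + 16 * (real n * v) \<le> t\<^sup>2"
    using small unfolding m_def[symmetric] v_def[symmetric] by (simp add: algebra_simps)
  ultimately have nm: "4 * (real n * m) \<le> t\<^sup>2" and nv: "16 * (real n * v) \<le> t\<^sup>2" by linarith+
  have m: "0 \<le> m" unfolding m_def by simp
  have "q \<le> measure N {x \<in> space N. s \<le> \<bar>x\<bar>}"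
    unfolding q_def using \<open>t \<le> s\<close> t sN
    by (intro N.finite_measure_mono) (auto simp: sets_eq_imp_space_eq)
  also have "\<dots> \<le> m / s\<^sup>2"
    unfolding m_def using sq_int \<open>t \<le> s\<close> t
    by (intro N.second_moment_method) (auto simp: measurable_cong_sets[OF sN refl])
  also have "\<dots> \<le> m / t\<^sup>2"
    using \<open>t \<le> s\<close> t m by (intro divide_left_mono power_mono) auto
  finally have "n * q \<le> n * (m / t\<^sup>2)" by (rule mult_left_mono) simp
  also have "\<dots> \<le> 1/4" using nm t by (simp add: field_simps)
  finally have "n * q \<le> 1/4" .
  moreover have "4 * real n * v / t\<^sup>2 \<le> 1/4"
    using nv t by (simp add: field_simps)
  ultimately have "n * q * (1/2) \<le> n * q * (1 - n * q - 4 * real n * v / t\<^sup>2)"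
    unfolding q_def by (intro mult_left_mono) auto
  also have "\<dots> \<le> ptilde n \<gamma> N"
    using ptilde_ge_one_big_jump[OF N sN sq_int mu t(1), of \<gamma> s n] \<gamma>
    unfolding s_def q_def v_def by (simp add: algebra_simps)
  finally show ?thesis unfolding s_def q_def by simp
qed

section \<open>Regularly varying tails\<close>

lemma slowly_varying_tail_halving:
  fixes G L :: "real \<Rightarrow> real" and \<alpha> :: real
  assumes tail: "\<And>x. x > 0 \<Longrightarrow> G x = L x * x powr (-\<alpha>)"
    and sv: "slowly_varying L" and \<alpha>: "\<alpha> > 1"
  shows "\<exists>x0>0. \<forall>x\<ge>x0. G (2 * x) \<le> G x / 2"
proof -
  have "((\<lambda>x. L (2 * x) / L x) \<longlongrightarrow> 1) at_top" using sv unfolding slowly_varying_def by simp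
  moreover have "1 < (2::real) powr (\<alpha> - 1)" using \<alpha> by simp
  ultimately have "\<forall>\<^sub>F x in at_top. L (2 * x) / L x < 2 powr (\<alpha> - 1)" by (rule order_tendstoD(2))
  moreover have "\<forall>\<^sub>F x in at_top. L x > 0" using sv unfolding slowly_varying_def by blast
  ultimately have "\<forall>\<^sub>F x in at_top. L (2 * x) / L x < 2 powr (\<alpha> - 1) \<and> L x > 0 \<and> x > (0::real)"
    using eventually_gt_at_top[of 0] by eventually_elim auto
  then obtain x0 where x0: "\<And>x. x \<ge> x0 \<Longrightarrow> L (2 * x) / L x < 2 powr (\<alpha> - 1) \<and> L x > 0 \<and> x > 0"
    unfolding eventually_at_top_linorder by blast
  have "G (2 * x) \<le> G x / 2" if "x \<ge> max x0 1" for x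
  proof -
    from that x0 have L: "L (2 * x) \<le> 2 powr (\<alpha> - 1) * L x" and x: "x > 0"
      by (auto simp: divide_less_eq less_imp_le)
    have "G (2 * x) = L (2 * x) * 2 powr (-\<alpha>) * x powr (-\<alpha>)"
      using tail[of "2 * x"] x by (simp add: powr_mult)
    also have "\<dots> \<le> 2 powr (\<alpha> - 1) * L x * 2 powr (-\<alpha>) * x powr (-\<alpha>)"
      using L by (intro mult_right_mono) auto
    also have "\<dots> = (2 powr (\<alpha> - 1) * 2 powr (-\<alpha>)) * G x"
      using tail[of x] x by (simp add: ac_simps)
    also have "2 powr (\<alpha> - 1) * 2 powr (-\<alpha>) = (2::real) powr (-1)"
      by (simp add: powr_add[symmetric])
    finally show ?thesis by (simp add: powr_minus)
  qed
  then show ?thesis by (intro exI[of _ "max x0 1"]) auto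
qed

lemma halving_tail_le:
  fixes G :: "real \<Rightarrow> real"
  assumes antimono: "\<And>x y. x \<le> y \<Longrightarrow> G y \<le> G x" and nonneg: "\<And>x. G x \<ge> 0"
    and x0: "x0 > 0" and halving: "\<And>x. x \<ge> x0 \<Longrightarrow> G (2 * x) \<le> G x / 2"
    and x: "x0 \<le> x" and y: "x \<le> y"
  shows "G y \<le> 2 * (x / y) * G x"
proof -
  have "G y \<le> 2 * (x / y) * G x" if "x0 \<le> x" "x \<le> y" "y < 2 ^ m * x" for m x y
    using that
  proof (induction m arbitrary: x)
    case 0
    then show ?case by simp
  next
    case (Suc m)
    have "x > 0" using Suc.prems x0 by simp
    show ?case
    proof (cases "y < 2 * x")
      case True
      have "1 \<le> 2 * (x / y)" using True \<open>x > 0\<close> Suc.prems by (simp add: field_simps)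
      then have "1 * G x \<le> 2 * (x / y) * G x" using nonneg[of x] by (rule mult_right_mono)
      then show ?thesis using antimono[OF \<open>x \<le> y\<close>] by simp
    next
      case False
      then have "G y \<le> 2 * (2 * x / y) * G (2 * x)"
        using Suc.prems \<open>x > 0\<close> by (intro Suc.IH) (auto simp: mult.assoc mult.commute)
      also have "\<dots> \<le> 2 * (2 * x / y) * (G x / 2)"
        using halving[OF \<open>x0 \<le> x\<close>] \<open>x > 0\<close> Suc.prems by (intro mult_left_mono) auto
      finally show ?thesis by simp
    qed
  qed
  moreover obtain m :: nat where "y / x < 2 ^ m" using real_arch_pow[of 2 "y / x"] by auto
  then have "y < 2 ^ m * x" using x x0 by (simp add: field_simps)
  ultimately show ?thesis using x y by blast
qed

lemma ptilde_trunc_dist_diff_le_ptilde: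
  fixes N :: "real measure"
  assumes N: "prob_space N" and sN: "sets N = sets borel"
    and sq_int: "integrable N (\<lambda>x. x\<^sup>2)" and mu: "\<mu> = (\<integral>x. x \<partial>N)"
    and x0: "x0 > 0" and halving: "\<And>x. x \<ge> x0 \<Longrightarrow> measure N {2 * x<..} \<le> measure N {x<..} / 2"
    and n: "n \<ge> 1" and \<gamma>: "\<gamma> = n * \<mu> + t" and t: "x0 \<le> t" "2 * \<bar>\<mu>\<bar> \<le> t"
    and small: "16 * ((\<integral>x. x\<^sup>2 \<partial>N) + (\<integral>x. (x - \<mu>)\<^sup>2 \<partial>N)) * n \<le> t\<^sup>2"
    and u: "16 * t \<le> u"
  shows "\<bar>ptilde n \<gamma> (trunc_dist N u) - ptilde n \<gamma> N\<bar> \<le> 16 * (t / u) * ptilde n \<gamma> N"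
proof -
  interpret N: prob_space N by (rule N)
  define G where "G x = measure N {x<..}" for x
  define s where "s = \<mu> + 3/2 * t"
  have "t > 0" "u > 0" using x0 t u by auto
  have s: "x0 \<le> s" "s \<le> u" "s \<le> 2 * t" unfolding s_def using t u by auto
  have half: "n * G s / 2 \<le> ptilde n \<gamma> N"
    unfolding G_def s_def by (rule ptilde_ge_half_one_big_jump[OF N sN sq_int mu \<open>t > 0\<close> t(2) \<gamma> small])
  have decay: "G u \<le> 2 * (s / u) * G s"
  proof (rule halving_tail_le[of G x0 s u])
    show "G y \<le> G x" if "x \<le> y" for x y
      unfolding G_def using that by (intro N.finite_measure_mono) (auto simp: sN)
    show "G (2 * x) \<le> G x / 2" if "x0 \<le> x" for x
      unfolding G_def using that by (rule halving)
  qed (use x0 s in \<open>auto simp: G_def\<close>)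
  have "n * G u \<le> n * (2 * (2 * t / u) * G s)"
    using decay s \<open>u > 0\<close>
    by (intro mult_left_mono order.trans[OF decay] mult_right_mono divide_right_mono) (auto simp: G_def)
  also have "\<dots> = 8 * (t / u) * (n * G s / 2)" by simp
  also have "\<dots> \<le> 8 * (t / u) * ptilde n \<gamma> N"
    using half \<open>t > 0\<close> \<open>u > 0\<close> by (intro mult_left_mono) auto
  finally have nGu: "n * G u \<le> 8 * (t / u) * ptilde n \<gamma> N" .
  also have "\<dots> \<le> 8 * (1 / 16) * 1"
    using \<open>t > 0\<close> u prob_space.prob_le_1[OF prob_space_PiM, of "{..<n}" "\<lambda>_. N"] N
    by (intro mult_mono) (auto simp: field_simps ptilde_def)
  finally have "n * G u \<le> 1/2" by simp
  have "\<bar>ptilde n \<gamma> (trunc_dist N u) - ptilde n \<gamma> N\<bar> \<le> 2 * real n * G u"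
    unfolding G_def by (rule ptilde_trunc_dist_diff_le[OF N sN n]) (use \<open>n * G u \<le> 1/2\<close> in \<open>simp add: G_def\<close>)
  with nGu show ?thesis by simp
qed

section \<open>Asymptotics\<close>

lemma integrable_square_of_abs_powr:
  fixes M :: "real measure"
  assumes M: "finite_measure M" and sM: "sets M = sets borel"
    and int: "integrable M (\<lambda>x. \<bar>x\<bar> powr p)" and p: "p \<ge> 2"
  shows "integrable M (\<lambda>x. x\<^sup>2)"
proof (rule Bochner_Integration.integrable_bound)
  show "integrable M (\<lambda>x. 1 + \<bar>x\<bar> powr p)"
    by (rule Bochner_Integration.integrable_add[OF finite_measure.integrable_const[OF M] int])
  show "(\<lambda>x. x\<^sup>2) \<in> borel_measurable M" by (simp add: measurable_cong_sets[OF sM refl])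
  have "x\<^sup>2 \<le> 1 + \<bar>x\<bar> powr p" for x :: real
  proof (cases "\<bar>x\<bar> \<le> 1")
    case True
    then have "x\<^sup>2 \<le> 1" by (simp add: abs_square_le_1)
    then show ?thesis by (smt (verit) powr_ge_zero)
  next
    case False
    then have "x\<^sup>2 = \<bar>x\<bar> powr 2" by (simp add: powr_numeral)
    also have "\<dots> \<le> \<bar>x\<bar> powr p" using False p by (intro powr_mono) auto
    finally show ?thesis by simp
  qed
  then show "AE x in M. norm (x\<^sup>2) \<le> norm (1 + \<bar>x\<bar> powr p)" by simp
qed

lemma filterlim_div_sqrt_of_div_sqrt_mult_ln:
  fixes a :: "nat \<Rightarrow> real"
  assumes "filterlim (\<lambda>n. a n / sqrt (real n * ln (real n))) at_top sequentially"
  shows "filterlim (\<lambda>n. a n / sqrt (real n)) at_top sequentially"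
proof (rule filterlim_at_top_mono[OF assms])
  have "\<forall>\<^sub>F n in sequentially. 0 \<le> a n / sqrt (real n * ln (real n))"
    using assms by (simp add: filterlim_at_top)
  then show "\<forall>\<^sub>F n in sequentially. a n / sqrt (real n * ln (real n)) \<le> a n / sqrt (real n)"
    using eventually_ge_at_top[of "3::nat"]
  proof eventually_elim
    case (elim n)
    have "exp 1 \<le> real n" using exp_le elim(2) by linarith
    then have "1 \<le> ln (real n)" using elim(2) by (subst ln_ge_iff) auto
    then have le: "sqrt (real n) \<le> sqrt (real n * ln (real n))"
      and pos: "0 < sqrt (real n)" "0 < sqrt (real n * ln (real n))"
      using elim(2) by (auto simp: mult_le_cancel_left1 intro: mult_pos_pos)
    then have "0 \<le> a n" using elim(1) by (simp add: zero_le_divide_iff)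
    from divide_left_mono[OF le this mult_pos_pos[OF pos(2,1)]] show ?case .
  qed
qed

lemma filterlim_at_top_of_div_sqrt:
  fixes a :: "nat \<Rightarrow> real"
  assumes "filterlim (\<lambda>n. a n / sqrt (real n)) at_top sequentially"
  shows "filterlim a at_top sequentially"
proof (rule filterlim_at_top_mono[OF assms])
  have "\<forall>\<^sub>F n in sequentially. 0 \<le> a n / sqrt (real n)"
    using assms by (simp add: filterlim_at_top)
  then show "\<forall>\<^sub>F n in sequentially. a n / sqrt (real n) \<le> a n"
    using eventually_ge_at_top[of "1::nat"]
    by eventually_elim (auto simp: zero_le_divide_iff divide_le_eq mult_le_cancel_left1)
qed

lemma eventually_le_square_of_div_sqrt:
  fixes a :: "nat \<Rightarrow> real" and C :: real
  assumes "filterlim (\<lambda>n. a n / sqrt (real n)) at_top sequentially"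
  shows "\<forall>\<^sub>F n in sequentially. C * real n \<le> (a n)\<^sup>2"
  using assms[unfolded filterlim_at_top, rule_format, of "sqrt \<bar>C\<bar>"] eventually_ge_at_top[of "1::nat"]
proof eventually_elim
  case (elim n)
  then have "sqrt \<bar>C\<bar> * sqrt (real n) \<le> a n" by (simp add: le_divide_eq)
  then have "(sqrt \<bar>C\<bar> * sqrt (real n))\<^sup>2 \<le> (a n)\<^sup>2" by (intro power_mono) auto
  then have "\<bar>C\<bar> * real n \<le> (a n)\<^sup>2" by (simp add: power_mult_distrib)
  then show ?case by (smt (verit) mult_right_mono of_nat_0_le_iff)
qed

lemma filterlim_div_at_top_of_div_powr:
  fixes u t :: "nat \<Rightarrow> real"
  assumes u: "filterlim (\<lambda>n. u n / t n powr \<beta>) at_top F"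
    and t: "filterlim t at_top F" and \<beta>: "\<beta> \<ge> 1"
  shows "filterlim (\<lambda>n. u n / t n) at_top F"
proof (rule filterlim_at_top_mono[OF u])
  show "\<forall>\<^sub>F n in F. u n / t n powr \<beta> \<le> u n / t n"
    using u[unfolded filterlim_at_top, rule_format, of 0] t[unfolded filterlim_at_top, rule_format, of 1]
  proof eventually_elim
    case (elim n)
    have "t n powr 1 \<le> t n powr \<beta>" using elim(2) \<beta> by (intro powr_mono) auto
    then have "t n \<le> t n powr \<beta>" using elim(2) by simp
    moreover have "0 \<le> u n" using elim by (simp add: zero_le_divide_iff)
    ultimately show ?case using elim(2) by (intro divide_left_mono) auto
  qed
qed

lemma smallo_of_eventually_le_mult:
  fixes f g h :: "nat \<Rightarrow> real"
  assumes bound: "\<forall>\<^sub>F n in F. \<bar>f n\<bar> \<le> g n * \<bar>h n\<bar>" and g: "(g \<longlongrightarrow> 0) F"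
  shows "f \<in> o[F](h)"
proof (rule landau_o.smallI)
  fix c :: real assume "c > 0"
  with g have "\<forall>\<^sub>F n in F. g n < c" by (rule order_tendstoD)
  with bound show "\<forall>\<^sub>F n in F. norm (f n) \<le> c * norm (h n)"
    by eventually_elim (metis abs_ge_zero less_imp_le mult_right_mono order.trans real_norm_def)
qed

lemma ptilde_trunc_dist_diff_smallo:
  fixes N :: "real measure" and \<gamma> u :: "nat \<Rightarrow> real"
  assumes N: "prob_space N" and sN: "sets N = sets borel"
    and sq_int: "integrable N (\<lambda>x. x\<^sup>2)" and mu: "\<mu> = (\<integral>x. x \<partial>N)"
    and halving: "\<exists>x0>0. \<forall>x\<ge>x0. measure N {2 * x<..} \<le> measure N {x<..} / 2"
    and \<gamma>: "filterlim (\<lambda>n. (\<gamma> n - real n * \<mu>) / sqrt (real n)) at_top sequentially"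
    and u: "filterlim (\<lambda>n. u n / (\<gamma> n - real n * \<mu>)) at_top sequentially"
  shows "(\<lambda>n. ptilde n (\<gamma> n) (trunc_dist N (u n)) - ptilde n (\<gamma> n) N) \<in> o(\<lambda>n. ptilde n (\<gamma> n) N)"
proof -
  obtain x0 where x0: "x0 > 0" "\<And>x. x \<ge> x0 \<Longrightarrow> measure N {2 * x<..} \<le> measure N {x<..} / 2"
    using halving by blast
  define t where "t n = \<gamma> n - real n * \<mu>" for n
  have t_sqrt: "filterlim (\<lambda>n. t n / sqrt (real n)) at_top sequentially" and
    ut: "filterlim (\<lambda>n. u n / t n) at_top sequentially"
    using \<gamma> u unfolding t_def by simp_all
  have "((\<lambda>n. 16 * (t n / u n)) \<longlongrightarrow> 0) sequentially"
    using tendsto_mult_right_zero[OF tendsto_inverse_0_at_top[OF ut], of 16] by simp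
  moreover have "\<forall>\<^sub>F n in sequentially. \<bar>ptilde n (\<gamma> n) (trunc_dist N (u n)) - ptilde n (\<gamma> n) N\<bar>
      \<le> 16 * (t n / u n) * \<bar>ptilde n (\<gamma> n) N\<bar>"
    using eventually_ge_at_top[of 1]
      filterlim_at_top_of_div_sqrt[OF t_sqrt, unfolded filterlim_at_top, rule_format, of "max x0 (2 * \<bar>\<mu>\<bar>)"]
      eventually_le_square_of_div_sqrt[OF t_sqrt, of "16 * ((\<integral>x. x\<^sup>2 \<partial>N) + (\<integral>x. (x - \<mu>)\<^sup>2 \<partial>N))"]
      ut[unfolded filterlim_at_top, rule_format, of 16]
  proof eventually_elim
    case (elim n)
    then have "x0 \<le> t n" "2 * \<bar>\<mu>\<bar> \<le> t n" by auto
    with elim x0(1) have "16 * t n \<le> u n" by (simp add: le_divide_eq)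
    moreover have "\<gamma> n = real n * \<mu> + t n" unfolding t_def by simp
    moreover have "0 \<le> ptilde n (\<gamma> n) N" unfolding ptilde_def by simp
    ultimately show ?case
      using ptilde_trunc_dist_diff_le_ptilde[OF N sN sq_int mu x0, of n "\<gamma> n" "t n" "u n"]
        elim \<open>x0 \<le> t n\<close> \<open>2 * \<bar>\<mu>\<bar> \<le> t n\<close> by (simp add: mult.commute)
  qed
  ultimately show ?thesis by (intro smallo_of_eventually_le_mult)
qed

theorem theorem5:
  fixes f :: "real \<Rightarrow> real" and M :: "real measure"
    and L :: "real \<Rightarrow> real" and \<alpha> \<delta> \<mu> \<beta> :: real
    and \<gamma> u :: "nat \<Rightarrow> real"
  assumes f_meas: "f \<in> borel_measurable borel"
    and f_nonneg: "\<And>x. f x \<ge> 0"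
    and M_def: "M = density lborel (\<lambda>x. ennreal (f x))"
    and prob: "prob_space M"
    and mean: "\<mu> = (\<integral>x. x \<partial>M)"
    and tail: "\<And>x. x > 0 \<Longrightarrow> 1 - measure M {..x} = L x * x powr (-\<alpha>)"
    and sv: "slowly_varying L"
    and alpha: "\<alpha> > 2"
    and delta: "\<delta> > 0"
    and moment: "integrable M (\<lambda>x. \<bar>x\<bar> powr (2 + \<delta>))"
    and gamma: "filterlim (\<lambda>n. (\<gamma> n - real n * \<mu>) / sqrt (real n * ln (real n))) at_top sequentially"
    and beta: "\<beta> > 1"
    and u: "filterlim (\<lambda>n. u n / (\<gamma> n - real n * \<mu>) powr \<beta>) at_top sequentially"
  shows "(\<lambda>n. ptilde n (\<gamma> n) (trunc_dist M (u n)) - ptilde n (\<gamma> n) M)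
           \<in> o(\<lambda>n. ptilde n (\<gamma> n) M)"
proof -
  have sM: "sets M = sets borel" using M_def by simp
  have "measure M {x<..} = L x * x powr (-\<alpha>)" if "x > 0" for x
    using tail[OF that] measure_greaterThan_eq_1_minus_atMost[OF prob sM, of x] by simp
  from slowly_varying_tail_halving[OF this sv] alpha
  have halving: "\<exists>x0>0. \<forall>x\<ge>x0. measure M {2 * x<..} \<le> measure M {x<..} / 2" by simp
  have sq_int: "integrable M (\<lambda>x. x\<^sup>2)"
    using integrable_square_of_abs_powr[OF prob_space.axioms(1)[OF prob] sM moment] delta by simp
  have t_sqrt: "filterlim (\<lambda>n. (\<gamma> n - real n * \<mu>) / sqrt (real n)) at_top sequentially"
    by (rule filterlim_div_sqrt_of_div_sqrt_mult_ln[OF gamma])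
  have "filterlim (\<lambda>n. u n / (\<gamma> n - real n * \<mu>)) at_top sequentially"
    using filterlim_div_at_top_of_div_powr[OF u filterlim_at_top_of_div_sqrt[OF t_sqrt]] beta by simp
  with ptilde_trunc_dist_diff_smallo[OF prob sM sq_int mean halving t_sqrt] show ?thesis .
qed

end
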